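(* Let $\mathbb{K}=(K,+,\times,0,1)$ be a semiring, let $A=(\Sigma,Q,\nu,\delta)$ be a RWTA with weights in $K$, and let $\sim$ be an equivalence relation on $Q$ that is down compatible with $A$. Then $\mathbb{P}_A=\mathbb{P}_{A_\sim}$.
   Context: A graded alphabet is a finite set $\Sigma=\bigcup_{k\in\mathbb{N}}\Sigma_k$; $T_\Sigma$ is the set of trees $f(t_1,\ldots,t_k)$ with $f\in\Sigma_k$. A RWTA with weights in $K$ is $A=(\Sigma,Q,\nu,\delta)$ with $Q$ finite, $\nu:Q\to K$, $\delta\subseteq\bigcup_k Q\times\Sigma_k\times Q^k$. Write $\delta(f,q_1,\ldots,q_k)=\{q\mid(q,f,q_1,\ldots,q_k)\in\delta\}$, extended to subsets by union over tuples; $\nu(S)=\sum_{s\in S}\nu(s)$ ($\nu(\emptyset)=0$); $\Delta(f(t_1,\ldots,t_k))=\delta(f,\Delta(t_1),\ldots,\Delta(t_k))$; $\mathbb{P}_A(t)=\nu(\Delta(t))$. The down language of $q$ is $L_q(A)=\{t\in T_\Sigma\mid q\in\Delta(t)\}$. An equivalence relation $\sim$ on $Q$ is down compatible with $A$ if $q_1\sim q_2$ implies $L_{q_1}(A)=L_{q_2}(A)$. The quotient of $A$ by an equivalence relation $\sim$ on $Q$ is the RWTA $A_\sim=(\Sigma,Q_\sim,\nu',\delta')$, where $Q_\sim$ is the set of equivalence classes, $\nu'(C)=\sum_{q\in C}\nu(q)$, and for classes $C_1,\ldots,C_{k+1}$ and $f\in\Sigma_k$, $C_{k+1}\in\delta'(f,C_1,\ldots,C_k)$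 iff there exist $q_i\in C_i$ ($1\le i\le k+1$) with $q_{k+1}\in\delta(f,q_1,\ldots,q_k)$. *)

theory Defs
  imports Main
begin

(* Ranked trees over symbols of type 'f.  A graded alphabet is a finite set
   Sig of symbols together with a rank function; T_Sigma = wf_trees. *)
datatype 'f tree = Node 'f "'f tree list"

fun wf_tree :: "'f set \<Rightarrow> ('f \<Rightarrow> nat) \<Rightarrow> 'f tree \<Rightarrow> bool" where
  "wf_tree Sig rank (Node f ts) =
     (f \<in> Sig \<and> length ts = rank f \<and> (\<forall>t\<in>set ts. wf_tree Sig rank t))"

definition trees :: "'f set \<Rightarrow> ('f \<Rightarrow> nat) \<Rightarrow> 'f tree set" where
  "trees Sig rank = {t. wf_tree Sig rank t}"

definition rwta :: "'f set \<Rightarrow> ('f \<Rightarrow> nat) \<Rightarrow> 'q set \<Rightarrow> ('q \<times> 'f \<times> 'q list) set \<Rightarrow> bool" where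
  "rwta Sig rank Q delta \<longleftrightarrow> finite Sig \<and> finite Q \<and>
     (\<forall>(q, f, qs) \<in> delta. q \<in> Q \<and> f \<in> Sig \<and> length qs = rank f \<and> set qs \<subseteq> Q)"

fun Delta :: "('q \<times> 'f \<times> 'q list) set \<Rightarrow> 'f tree \<Rightarrow> 'q set" where
  "Delta delta (Node f ts) =
     {q. \<exists>qs. list_all2 (\<lambda>q S. q \<in> S) qs (map (Delta delta) ts) \<and> (q, f, qs) \<in> delta}"

definition PA :: "('q \<Rightarrow> 'k::semiring_1) \<Rightarrow> ('q \<times> 'f \<times> 'q list) set \<Rightarrow> 'f tree \<Rightarrow> 'k" where
  "PA nu delta t = sum nu (Delta delta t)"

definition down_lang :: "'f set \<Rightarrow> ('f \<Rightarrow> nat) \<Rightarrow> ('q \<times> 'f \<times> 'q list) set \<Rightarrow> 'q \<Rightarrow> 'f tree set" where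
  "down_lang Sig rank delta q = {t \<in> trees Sig rank. q \<in> Delta delta t}"

definition down_compatible ::
  "'f set \<Rightarrow> ('f \<Rightarrow> nat) \<Rightarrow> ('q \<times> 'f \<times> 'q list) set \<Rightarrow> ('q \<times> 'q) set \<Rightarrow> bool" where
  "down_compatible Sig rank delta R \<longleftrightarrow>
     (\<forall>(q1, q2) \<in> R. down_lang Sig rank delta q1 = down_lang Sig rank delta q2)"

definition quot_nu :: "('q \<Rightarrow> 'k::semiring_1) \<Rightarrow> 'q set \<Rightarrow> 'k" where
  "quot_nu nu C = sum nu C"

definition quot_delta ::
  "'q set \<Rightarrow> ('q \<times> 'q) set \<Rightarrow> ('q \<times> 'f \<times> 'q list) set \<Rightarrow> ('q set \<times> 'f \<times> 'q set list) set" where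
  "quot_delta Q R delta =
     {(C, f, Cs). C \<in> Q // R \<and> set Cs \<subseteq> Q // R \<and>
        (\<exists>q qs. q \<in> C \<and> list_all2 (\<lambda>q C. q \<in> C) qs Cs \<and> (q, f, qs) \<in> delta)}"

end

theory Submission
  imports Defs
begin

text \<open>By down compatibility the set \<open>\<Delta>(t)\<close> of states reached by a tree is a union of
  equivalence classes, and by induction on \<open>t\<close> the quotient automaton reaches exactly these
  classes. Hence \<open>\<nu>'(\<Delta>'(t))\<close> is the sum of \<open>\<nu>\<close> over \<open>\<Delta>(t)\<close>, regrouped class by class.\<close>

lemma sum_sum_quotient_closed:
  assumes "equiv A r" "finite A" "B \<subseteq> A" "r `` B \<subseteq> B"
  shows "sum (sum f) (B // r) = sum f B"
proof -
  have classes: "B // r \<subseteq> A // r"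
    using assms(3) by (auto simp: quotient_def)
  have union: "\<Union> (B // r) = B"
    using assms(1,3,4) by (auto simp: quotient_def dest: equiv_class_self)
  have finite: "\<forall>X \<in> B // r. finite X"
    using classes finite_equiv_class[OF assms(2) equiv_type[OF assms(1)]] by blast
  have disjoint: "\<forall>X \<in> B // r. \<forall>Y \<in> B // r. X \<noteq> Y \<longrightarrow> X \<inter> Y = {}"
    using classes quotient_disj[OF assms(1)] by blast
  show ?thesis
    using sum.Union_disjoint[OF finite disjoint, of f] by (simp add: union)
qed

lemma Delta_subset_states:
  assumes "rwta Sig rank Q delta"
  shows "Delta delta t \<subseteq> Q"
  using assms by (cases t) (auto simp: rwta_def)

lemma Delta_closed_under_down_compatible:
  assumes "down_compatible Sig rank delta R" "wf_tree Sig rank t"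
  shows "R `` Delta delta t \<subseteq> Delta delta t"
  using assms by (auto simp: down_compatible_def down_lang_def trees_def)

lemma quot_deltaI:
  assumes "C \<in> Q // R" "set Cs \<subseteq> Q // R" "q \<in> C"
    and "list_all2 (\<lambda>q C. q \<in> C) qs Cs" "(q, f, qs) \<in> delta"
  shows "(C, f, Cs) \<in> quot_delta Q R delta"
  using assms unfolding quot_delta_def by blast

lemma quotient_Delta_subset_Delta_quot_delta:
  assumes rw: "rwta Sig rank Q delta" and eq: "equiv Q R"
  shows "Delta delta t // R \<subseteq> Delta (quot_delta Q R delta) t"
proof (induction t)
  case (Node f ts)
  show ?case
  proof
    fix C assume "C \<in> Delta delta (Node f ts) // R"
    then obtain q qs where C: "C = R `` {q}"
      and qs: "list_all2 (\<lambda>q S. q \<in> S) qs (map (Delta delta) ts)"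
      and tr: "(q, f, qs) \<in> delta"
      by (auto simp: quotient_def)
    have in_Q: "q \<in> Q" "set qs \<subseteq> Q"
      using tr rw by (auto simp: rwta_def)
    have self: "\<And>x. x \<in> Q \<Longrightarrow> (x, x) \<in> R"
      using eq by (auto simp: equiv_def refl_on_def)
    define Cs where "Cs = map (\<lambda>q. R `` {q}) qs"
    have "list_all2 (\<lambda>q C. q \<in> C) qs Cs"
      using in_Q(2) by (auto simp: Cs_def list_all2_conv_all_nth intro!: self)
    moreover have "C \<in> Q // R" "q \<in> C" "set Cs \<subseteq> Q // R"
      using in_Q by (auto simp: C Cs_def quotientI self)
    ultimately have "(C, f, Cs) \<in> quot_delta Q R delta"
      using tr by (blast intro: quot_deltaI)
    moreover have "list_all2 (\<lambda>C S. C \<in> S) Cs (map (Delta (quot_delta Q R delta)) ts)"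
      using qs unfolding Cs_def
      by (auto simp: list_all2_conv_all_nth intro!: subsetD[OF Node.IH[OF nth_mem]] quotientI)
    ultimately show "C \<in> Delta (quot_delta Q R delta) (Node f ts)"
      by auto
  qed
qed

lemma Delta_quot_delta_subset_quotient:
  assumes eq: "equiv Q R" and dc: "down_compatible Sig rank delta R"
  shows "wf_tree Sig rank t \<Longrightarrow> Delta (quot_delta Q R delta) t \<subseteq> Delta delta t // R"
proof (induction t)
  case (Node f ts)
  show ?case
  proof
    fix C assume "C \<in> Delta (quot_delta Q R delta) (Node f ts)"
    then obtain Cs q qs
      where Cs: "list_all2 (\<lambda>C S. C \<in> S) Cs (map (Delta (quot_delta Q R delta)) ts)"
        and C: "C \<in> Q // R" "q \<in> C"
        and qs: "list_all2 (\<lambda>q C. q \<in> C) qs Cs"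
        and tr: "(q, f, qs) \<in> delta"
      by (auto simp: quot_delta_def)
    have "qs ! i \<in> Delta delta (ts ! i)" if i: "i < length qs" for i
    proof -
      have lengths: "i < length ts" "i < length Cs"
        using i Cs qs by (auto simp: list_all2_conv_all_nth)
      then have "wf_tree Sig rank (ts ! i)"
        using Node.prems by simp
      moreover have "Cs ! i \<in> Delta delta (ts ! i) // R"
        using Node.IH[OF nth_mem[OF lengths(1)] \<open>wf_tree Sig rank (ts ! i)\<close>] lengths Cs
        by (auto simp: list_all2_conv_all_nth)
      moreover have "qs ! i \<in> Cs ! i"
        using qs i by (auto simp: list_all2_conv_all_nth)
      ultimately show ?thesis
        using Delta_closed_under_down_compatible[OF dc] by (auto simp: quotient_def)
    qed
    then have "q \<in> Delta delta (Node f ts)"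
      using tr Cs qs by (auto simp: list_all2_conv_all_nth)
    moreover have "C = R `` {q}"
      using C eq by (metis Image_singleton_iff equiv_class_eq_iff quotientE)
    ultimately show "C \<in> Delta delta (Node f ts) // R"
      by (simp add: quotientI)
  qed
qed

theorem proposition6:
  fixes Sig :: "'f set" and rank :: "'f \<Rightarrow> nat" and Q :: "'q set"
    and nu :: "'q \<Rightarrow> 'k::semiring_1" and delta :: "('q \<times> 'f \<times> 'q list) set"
    and R :: "('q \<times> 'q) set"
  assumes "rwta Sig rank Q delta"
    and "equiv Q R"
    and "down_compatible Sig rank delta R"
  shows "\<forall>t \<in> trees Sig rank. PA nu delta t = PA (quot_nu nu) (quot_delta Q R delta) t"
proof
  fix t assume "t \<in> trees Sig rank"
  then have wf: "wf_tree Sig rank t" by (simp add: trees_def)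
  have "Delta (quot_delta Q R delta) t = Delta delta t // R"
    using quotient_Delta_subset_Delta_quot_delta[OF assms(1,2)]
      Delta_quot_delta_subset_quotient[OF assms(2,3) wf] by blast
  then have "PA (quot_nu nu) (quot_delta Q R delta) t = sum (sum nu) (Delta delta t // R)"
    by (simp add: PA_def quot_nu_def)
  also have "\<dots> = PA nu delta t"
    using sum_sum_quotient_closed[OF assms(2) _ Delta_subset_states[OF assms(1)]
        Delta_closed_under_down_compatible[OF assms(3) wf]] assms(1)
    by (simp add: PA_def rwta_def)
  finally show "PA nu delta t = PA (quot_nu nu) (quot_delta Q R delta) t" ..
qed

end
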